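(* Let $\mathfrak g$ be a Lie algebra over a field $\mathbb k$ and $(X,\Delta,T)$ the associated TSD object obtained by composing the binary SD operation. For a Lie $2$-cochain $\phi$ define $\Theta^2(\phi)\colon X^{\otimes 3}\to X$ by $\Theta^2(\phi)((a,x)\otimes(b,y)\otimes(c,z))=\big(0,\ b\phi(x,z)+c\phi(x,y)+[\phi(x,y),z]+\phi([x,y],z)\big).$ Then $\Theta^2$ maps $Z^2_{\rm Lie}(\mathfrak g;\mathfrak g)$ into $Z^2_{\rm TSD}(X;X)$ and $B^2_{\rm Lie}(\mathfrak g;\mathfrak g)$ into $B^2_{\rm TSD}(X;X)$, and thus induces a homomorphism $H^2_{\rm Lie}(\mathfrak g;\mathfrak g)\to H^2_{\rm TSD}(X;X)$.
   Context: $X=\mathbb k\oplus\mathfrak g$, $\Delta(a,x)=(a,x)\otimes(1,0)+(1,0)\otimes(0,x)$, $\Delta_3=(\Delta\otimes\mathbb 1)\Delta$ (Sweedler $\Delta_3(w)=w^{(1)}\otimes w^{(2)}\otimes w^{(3)}$), $q((a,x)\otimes(b,y))=(ab,bx+[x,y])$, and $T=q\circ(q\otimes\mathbb 1)$, i.e. $T((a,x)\otimes(b,y)\otimes(c,z))=(abc,\ bcx+c[x,y]+b[x,z]+[[x,y],z])$. TSD cohomology: $\sigma\colon X^{\otimes 9}\to X^{\otimes 9}$ sends $u_1\otimes\cdots\otimes u_9$ to $u_1\otimes u_4\otimes u_7\otimes u_2\otimes u_5\otimes u_8\otimes u_3\otimes u_6\otimes u_9$. $C^1_{\rm TSD}$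 = linear $f$ with $\Delta_3 f=(f\otimes\mathbb 1\otimes\mathbb 1+\mathbb 1\otimes f\otimes\mathbb 1+\mathbb 1\otimes\mathbb 1\otimes f)\Delta_3$; $C^2_{\rm TSD}$ = linear $\psi\colon X^{\otimes 3}\to X$ with $\Delta_3\psi=(\psi\otimes T\otimes T+T\otimes\psi\otimes T+T\otimes T\otimes\psi)\sigma\Delta_3^{\otimes3}$; $\delta^1 f(x\otimes y\otimes z)=f(T(x\otimes y\otimes z))-T(f(x)\otimes y\otimes z)-T(x\otimes f(y)\otimes z)-T(x\otimes y\otimes f(z))$; $\delta^2\psi(x\otimes y\otimes z\otimes w\otimes u)=T(\psi(x\otimes y\otimes z)\otimes w\otimes u)+\psi(T(x\otimes y\otimes z)\otimes w\otimes u)-\psi(A_1\otimes A_2\otimes A_3)-T(\Psi_1\otimes A_2\otimes A_3)-T(A_1\otimes\Psi_2\otimes A_3)-T(A_1\otimes A_2\otimes\Psi_3)$, where $A_i=T(x_i\otimes w^{(i)}\otimes u^{(i)})$, $(x_1,x_2,x_3)=(x,y,z)$, $\Psi_i$ likewise with $\psi$; $Z^2_{\rm TSD}=C^2_{\rm TSD}\cap\ker\delta^2$, $B^2_{\rm TSD}=\delta^1(C^1_{\rm TSD})$, $H^2_{\rm TSD}=Z^2/B^2$. Lie cohomology: $2$-cochains are alternating bilinear $\phi\colon\mathfrak g\times\mathfrak g\to\mathfrak g$; $\delta^2\phi(x,y,z)=[\phi(x,y),z]+[\phi(y,z),x]+[\phi(z,x),y]+\phi([x,y],z)+\phi([y,z],x)+\phi([z,x],y)$;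 $\delta^1f(x,y)=f([x,y])-[f(x),y]-[x,f(y)]$; $H^2_{\rm Lie}=\ker\delta^2/\operatorname{im}\delta^1$. *)

theory Defs
  imports Complex_Main "HOL-Library.Product_Plus"
begin

text \<open>The TSD object is
  X = k (+) g, modelled as the product type 'k * 'g (componentwise addition from
  Product_Plus), with scalar multiplication Xsc.\<close>

definition Xsc :: "('k::field \<Rightarrow> 'g::ab_group_add \<Rightarrow> 'g) \<Rightarrow> 'k \<Rightarrow> 'k \<times> 'g \<Rightarrow> 'k \<times> 'g" where
  "Xsc scale c u = (c * fst u, scale c (snd u))"

definition g_lin :: "('k::field \<Rightarrow> 'g::ab_group_add \<Rightarrow> 'g) \<Rightarrow> ('g \<Rightarrow> 'g) \<Rightarrow> bool" where
  "g_lin scale f \<longleftrightarrow> (\<forall>x y. f (x + y) = f x + f y) \<and> (\<forall>c x. f (scale c x) = scale c (f x))"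

definition g_bilin :: "('k::field \<Rightarrow> 'g::ab_group_add \<Rightarrow> 'g) \<Rightarrow> ('g \<Rightarrow> 'g \<Rightarrow> 'g) \<Rightarrow> bool" where
  "g_bilin scale b \<longleftrightarrow> (\<forall>y. g_lin scale (\<lambda>x. b x y)) \<and> (\<forall>x. g_lin scale (\<lambda>y. b x y))"

definition lie_algebra :: "('k::field \<Rightarrow> 'g::ab_group_add \<Rightarrow> 'g) \<Rightarrow> ('g \<Rightarrow> 'g \<Rightarrow> 'g) \<Rightarrow> bool" where
  "lie_algebra scale br \<longleftrightarrow> vector_space scale \<and> g_bilin scale br \<and> (\<forall>x. br x x = 0)
     \<and> (\<forall>x y z. br x (br y z) + br y (br z x) + br z (br x y) = 0)"

definition C2_Lie :: "('k::field \<Rightarrow> 'g::ab_group_add \<Rightarrow> 'g) \<Rightarrow> ('g \<Rightarrow> 'g \<Rightarrow> 'g) \<Rightarrow> bool" where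
  "C2_Lie scale \<phi> \<longleftrightarrow> g_bilin scale \<phi> \<and> (\<forall>x. \<phi> x x = 0)"

definition lie_delta2 :: "('g::ab_group_add \<Rightarrow> 'g \<Rightarrow> 'g) \<Rightarrow> ('g \<Rightarrow> 'g \<Rightarrow> 'g) \<Rightarrow> 'g \<Rightarrow> 'g \<Rightarrow> 'g \<Rightarrow> 'g" where
  "lie_delta2 br \<phi> x y z = br (\<phi> x y) z + br (\<phi> y z) x + br (\<phi> z x) y
     + \<phi> (br x y) z + \<phi> (br y z) x + \<phi> (br z x) y"

definition lie_delta1 :: "('g::ab_group_add \<Rightarrow> 'g \<Rightarrow> 'g) \<Rightarrow> ('g \<Rightarrow> 'g) \<Rightarrow> 'g \<Rightarrow> 'g \<Rightarrow> 'g" where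
  "lie_delta1 br f x y = f (br x y) - br (f x) y - br x (f y)"

definition Z2_Lie :: "('k::field \<Rightarrow> 'g::ab_group_add \<Rightarrow> 'g) \<Rightarrow> ('g \<Rightarrow> 'g \<Rightarrow> 'g) \<Rightarrow> ('g \<Rightarrow> 'g \<Rightarrow> 'g) set" where
  "Z2_Lie scale br = {\<phi>. C2_Lie scale \<phi> \<and> (\<forall>x y z. lie_delta2 br \<phi> x y z = 0)}"

definition B2_Lie :: "('k::field \<Rightarrow> 'g::ab_group_add \<Rightarrow> 'g) \<Rightarrow> ('g \<Rightarrow> 'g \<Rightarrow> 'g) \<Rightarrow> ('g \<Rightarrow> 'g \<Rightarrow> 'g) set" where
  "B2_Lie scale br = {\<phi>. \<exists>f. g_lin scale f \<and> \<phi> = lie_delta1 br f}"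

definition Xlin :: "('k::field \<Rightarrow> 'g::ab_group_add \<Rightarrow> 'g) \<Rightarrow> ('k \<times> 'g \<Rightarrow> 'k \<times> 'g) \<Rightarrow> bool" where
  "Xlin scale f \<longleftrightarrow> (\<forall>u v. f (u + v) = f u + f v) \<and> (\<forall>c u. f (Xsc scale c u) = Xsc scale c (f u))"

text \<open>A linear map X (x) X (x) X \<rightarrow> X is represented by the trilinear map it induces.\<close>
definition Xtrilin :: "('k::field \<Rightarrow> 'g::ab_group_add \<Rightarrow> 'g) \<Rightarrow> ('k \<times> 'g \<Rightarrow> 'k \<times> 'g \<Rightarrow> 'k \<times> 'g \<Rightarrow> 'k \<times> 'g) \<Rightarrow> bool" where
  "Xtrilin scale \<psi> \<longleftrightarrow> (\<forall>v w. Xlin scale (\<lambda>u. \<psi> u v w)) \<and> (\<forall>u w. Xlin scale (\<lambda>v. \<psi> u v w))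
     \<and> (\<forall>u v. Xlin scale (\<lambda>w. \<psi> u v w))"

definition qop :: "('k::field \<Rightarrow> 'g::ab_group_add \<Rightarrow> 'g) \<Rightarrow> ('g \<Rightarrow> 'g \<Rightarrow> 'g) \<Rightarrow> 'k \<times> 'g \<Rightarrow> 'k \<times> 'g \<Rightarrow> 'k \<times> 'g" where
  "qop scale br u v = (fst u * fst v, scale (fst v) (snd u) + br (snd u) (snd v))"

definition Top :: "('k::field \<Rightarrow> 'g::ab_group_add \<Rightarrow> 'g) \<Rightarrow> ('g \<Rightarrow> 'g \<Rightarrow> 'g) \<Rightarrow> 'k \<times> 'g \<Rightarrow> 'k \<times> 'g \<Rightarrow> 'k \<times> 'g \<Rightarrow> 'k \<times> 'g" where
  "Top scale br u v w = qop scale br (qop scale br u v) w"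

text \<open>Elements of X (x) X and X (x) X (x) X given as formal sums of pure tensors
  (lists of coefficient, factors).  Delta(a,x) = (a,x)(x)(1,0) + (1,0)(x)(0,x),
  Delta3 = (Delta (x) 1) Delta.\<close>
definition Delta :: "'k::field \<times> 'g::ab_group_add \<Rightarrow> ('k \<times> ('k \<times> 'g) \<times> ('k \<times> 'g)) list" where
  "Delta w = [(1, w, (1, 0)), (1, (1, 0), (0, snd w))]"

definition Delta3 :: "'k::field \<times> 'g::ab_group_add \<Rightarrow> ('k \<times> ('k \<times> 'g) \<times> ('k \<times> 'g) \<times> ('k \<times> 'g)) list" where
  "Delta3 w = concat (map (\<lambda>(c, v, r). map (\<lambda>(c', p, q). (c * c', p, q, r)) (Delta v)) (Delta w))"

text \<open>Free vector space on triples: finitely supported functions. A formal sum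
  is sent to its element of the free vector space; the tensor product is the
  quotient by the span of the multilinearity relations.\<close>
definition fsum3 :: "('k::field \<times> 'x \<times> 'x \<times> 'x) list \<Rightarrow> ('x \<times> 'x \<times> 'x \<Rightarrow> 'k)" where
  "fsum3 l t = sum_list (map fst (filter (\<lambda>e. snd e = t) l))"

definition dl3 :: "'x \<times> 'x \<times> 'x \<Rightarrow> ('x \<times> 'x \<times> 'x \<Rightarrow> 'k::field)" where
  "dl3 t = (\<lambda>s. if s = t then 1 else 0)"

definition gens3 :: "('k::field \<Rightarrow> 'g::ab_group_add \<Rightarrow> 'g) \<Rightarrow> (('k \<times> 'g) \<times> ('k \<times> 'g) \<times> ('k \<times> 'g) \<Rightarrow> 'k) set" where
  "gens3 scale =
     {(\<lambda>s. dl3 (u + v, y, z) s - dl3 (u, y, z) s - dl3 (v, y, z) s) | u v y z. True}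
   \<union> {(\<lambda>s. dl3 (x, u + v, z) s - dl3 (x, u, z) s - dl3 (x, v, z) s) | x u v z. True}
   \<union> {(\<lambda>s. dl3 (x, y, u + v) s - dl3 (x, y, u) s - dl3 (x, y, v) s) | x y u v. True}
   \<union> {(\<lambda>s. dl3 (Xsc scale c u, y, z) s - c * dl3 (u, y, z) s) | c u y z. True}
   \<union> {(\<lambda>s. dl3 (x, Xsc scale c u, z) s - c * dl3 (x, u, z) s) | c x u z. True}
   \<union> {(\<lambda>s. dl3 (x, y, Xsc scale c u) s - c * dl3 (x, y, u) s) | c x y u. True}"

inductive tz3 :: "('k::field \<Rightarrow> 'g::ab_group_add \<Rightarrow> 'g) \<Rightarrow> (('k \<times> 'g) \<times> ('k \<times> 'g) \<times> ('k \<times> 'g) \<Rightarrow> 'k) \<Rightarrow> bool"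
  for scale where
  tz3_zero: "tz3 scale (\<lambda>_. 0)"
| tz3_gen: "f \<in> gens3 scale \<Longrightarrow> tz3 scale f"
| tz3_add: "tz3 scale f \<Longrightarrow> tz3 scale g \<Longrightarrow> tz3 scale (\<lambda>s. f s + g s)"
| tz3_smult: "tz3 scale f \<Longrightarrow> tz3 scale (\<lambda>s. c * f s)"

definition tensor3_eq :: "('k::field \<Rightarrow> 'g::ab_group_add \<Rightarrow> 'g)
   \<Rightarrow> ('k \<times> ('k \<times> 'g) \<times> ('k \<times> 'g) \<times> ('k \<times> 'g)) list
   \<Rightarrow> ('k \<times> ('k \<times> 'g) \<times> ('k \<times> 'g) \<times> ('k \<times> 'g)) list \<Rightarrow> bool" where
  "tensor3_eq scale l1 l2 \<longleftrightarrow> tz3 scale (\<lambda>s. fsum3 l1 s - fsum3 l2 s)"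

definition C1_TSD :: "('k::field \<Rightarrow> 'g::ab_group_add \<Rightarrow> 'g) \<Rightarrow> ('k \<times> 'g \<Rightarrow> 'k \<times> 'g) set" where
  "C1_TSD scale = {f. Xlin scale f \<and> (\<forall>w. tensor3_eq scale (Delta3 (f w))
      (concat (map (\<lambda>(c, p, q, r). [(c, f p, q, r), (c, p, f q, r), (c, p, q, f r)]) (Delta3 w))))}"

text \<open>Delta3^{(x)3}(x (x) y (x) z) as a formal sum of pure 9-tensors (lists of length 9).\<close>
definition Delta3_pow3 :: "'k::field \<times> 'g::ab_group_add \<Rightarrow> 'k \<times> 'g \<Rightarrow> 'k \<times> 'g \<Rightarrow> ('k \<times> ('k \<times> 'g) list) list" where
  "Delta3_pow3 x y z = [(c * d * e, [x1, x2, x3, y1, y2, y3, z1, z2, z3]).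
      (c, x1, x2, x3) \<leftarrow> Delta3 x, (d, y1, y2, y3) \<leftarrow> Delta3 y, (e, z1, z2, z3) \<leftarrow> Delta3 z]"

definition sigma9 :: "'a list \<Rightarrow> 'a list" where
  "sigma9 us = map ((!) us) [0, 3, 6, 1, 4, 7, 2, 5, 8]"

definition tapp3 :: "('x \<Rightarrow> 'x \<Rightarrow> 'x \<Rightarrow> 'x) \<Rightarrow> ('x \<Rightarrow> 'x \<Rightarrow> 'x \<Rightarrow> 'x) \<Rightarrow> ('x \<Rightarrow> 'x \<Rightarrow> 'x \<Rightarrow> 'x) \<Rightarrow> 'x list \<Rightarrow> 'x \<times> 'x \<times> 'x" where
  "tapp3 F G H us = (F (us!0) (us!1) (us!2), G (us!3) (us!4) (us!5), H (us!6) (us!7) (us!8))"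

definition C2_TSD :: "('k::field \<Rightarrow> 'g::ab_group_add \<Rightarrow> 'g) \<Rightarrow> ('g \<Rightarrow> 'g \<Rightarrow> 'g)
    \<Rightarrow> ('k \<times> 'g \<Rightarrow> 'k \<times> 'g \<Rightarrow> 'k \<times> 'g \<Rightarrow> 'k \<times> 'g) set" where
  "C2_TSD scale br = {\<psi>. Xtrilin scale \<psi> \<and> (\<forall>x y z. tensor3_eq scale (Delta3 (\<psi> x y z))
      (concat (map (\<lambda>(c, us). let vs = sigma9 us; T = Top scale br in
          [(c, tapp3 \<psi> T T vs), (c, tapp3 T \<psi> T vs), (c, tapp3 T T \<psi> vs)])
        (Delta3_pow3 x y z))))}"

definition tsd_delta1 :: "('k::field \<Rightarrow> 'g::ab_group_add \<Rightarrow> 'g) \<Rightarrow> ('g \<Rightarrow> 'g \<Rightarrow> 'g)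
    \<Rightarrow> ('k \<times> 'g \<Rightarrow> 'k \<times> 'g) \<Rightarrow> 'k \<times> 'g \<Rightarrow> 'k \<times> 'g \<Rightarrow> 'k \<times> 'g \<Rightarrow> 'k \<times> 'g" where
  "tsd_delta1 scale br f x y z = (let T = Top scale br in
     f (T x y z) - T (f x) y z - T x (f y) z - T x y (f z))"

text \<open>delta^2 psi on a pure 5-tensor; Sweedler sums over Delta3 w and Delta3 u.\<close>
definition tsd_delta2 :: "('k::field \<Rightarrow> 'g::ab_group_add \<Rightarrow> 'g) \<Rightarrow> ('g \<Rightarrow> 'g \<Rightarrow> 'g)
    \<Rightarrow> ('k \<times> 'g \<Rightarrow> 'k \<times> 'g \<Rightarrow> 'k \<times> 'g \<Rightarrow> 'k \<times> 'g)
    \<Rightarrow> 'k \<times> 'g \<Rightarrow> 'k \<times> 'g \<Rightarrow> 'k \<times> 'g \<Rightarrow> 'k \<times> 'g \<Rightarrow> 'k \<times> 'g \<Rightarrow> 'k \<times> 'g" where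
  "tsd_delta2 scale br \<psi> x y z w u = (let T = Top scale br in
     T (\<psi> x y z) w u + \<psi> (T x y z) w u
     - sum_list [Xsc scale (c * d)
          (let A1 = T x w1 u1; A2 = T y w2 u2; A3 = T z w3 u3 in
             \<psi> A1 A2 A3 + T (\<psi> x w1 u1) A2 A3 + T A1 (\<psi> y w2 u2) A3 + T A1 A2 (\<psi> z w3 u3)).
        (c, w1, w2, w3) \<leftarrow> Delta3 w, (d, u1, u2, u3) \<leftarrow> Delta3 u])"

definition Z2_TSD :: "('k::field \<Rightarrow> 'g::ab_group_add \<Rightarrow> 'g) \<Rightarrow> ('g \<Rightarrow> 'g \<Rightarrow> 'g)
    \<Rightarrow> ('k \<times> 'g \<Rightarrow> 'k \<times> 'g \<Rightarrow> 'k \<times> 'g \<Rightarrow> 'k \<times> 'g) set" where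
  "Z2_TSD scale br = {\<psi>. \<psi> \<in> C2_TSD scale br \<and> (\<forall>x y z w u. tsd_delta2 scale br \<psi> x y z w u = 0)}"

definition B2_TSD :: "('k::field \<Rightarrow> 'g::ab_group_add \<Rightarrow> 'g) \<Rightarrow> ('g \<Rightarrow> 'g \<Rightarrow> 'g)
    \<Rightarrow> ('k \<times> 'g \<Rightarrow> 'k \<times> 'g \<Rightarrow> 'k \<times> 'g \<Rightarrow> 'k \<times> 'g) set" where
  "B2_TSD scale br = tsd_delta1 scale br ` C1_TSD scale"

definition Theta2 :: "('k::field \<Rightarrow> 'g::ab_group_add \<Rightarrow> 'g) \<Rightarrow> ('g \<Rightarrow> 'g \<Rightarrow> 'g) \<Rightarrow> ('g \<Rightarrow> 'g \<Rightarrow> 'g)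
    \<Rightarrow> 'k \<times> 'g \<Rightarrow> 'k \<times> 'g \<Rightarrow> 'k \<times> 'g \<Rightarrow> 'k \<times> 'g" where
  "Theta2 scale br \<phi> u v w = (0,
     scale (fst v) (\<phi> (snd u) (snd w)) + scale (fst w) (\<phi> (snd u) (snd v))
     + br (\<phi> (snd u) (snd v)) (snd w) + \<phi> (br (snd u) (snd v)) (snd w))"

end

theory Submission
  imports Defs
begin

text \<open>
  For every Lie algebra the map \<open>T\<close> is ternary self-distributive: writing \<open>w = (d, p)\<close>, right
  multiplication by \<open>w\<close> in the binary operation \<open>q\<close> is \<open>d\<close> times the identity plus right
  multiplication by the primitive element \<open>(0, p)\<close>, and the latter is a derivation of \<open>q\<close> by the
  Jacobi identity; hence it is a derivation of \<open>T\<close>, which is self-distributivity.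

  A Lie 2-cochain \<open>\<phi>\<close> defines the bracket \<open>[x, y] + \<epsilon> \<phi>(x, y)\<close> on \<open>g[\<epsilon>]\<close>, \<open>\<epsilon>\<^sup>2 = 0\<close>, and this
  is a Lie bracket exactly when \<open>\<phi>\<close> is a cocycle.  The \<open>\<epsilon>\<close>-coefficient of the ternary operation of
  the deformed algebra is \<open>\<Theta>\<^sup>2(\<phi>)\<close>, so the \<open>\<epsilon>\<close>-coefficient of its self-distributivity is the
  TSD cocycle identity for \<open>\<Theta>\<^sup>2(\<phi>)\<close>.  For coboundaries, \<open>\<Theta>\<^sup>2(\<delta>f) = \<delta>(0 \<oplus> f)\<close>.  The
  comultiplicativity conditions are finite computations in \<open>X \<otimes> X \<otimes> X\<close>, where pure tensors
  with a zero factor vanish.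
\<close>

section \<open>Self-distributivity of \<open>T\<close>\<close>

lemma g_linD:
  assumes "g_lin scale f" "vector_space scale"
  shows "f (x + y) = f x + f y" "f (scale c x) = scale c (f x)" "f 0 = 0" "f (- x) = - f x"
    "f (x - y) = f x - f y"
proof -
  interpret additive f using assms(1) by unfold_locales (simp add: g_lin_def)
  show "f (x + y) = f x + f y" "f 0 = 0" "f (- x) = - f x" "f (x - y) = f x - f y"
    by (simp_all add: add diff minus zero)
  show "f (scale c x) = scale c (f x)" using assms(1) by (simp add: g_lin_def)
qed

lemma g_bilinD:
  assumes "g_bilin scale b" "vector_space scale"
  shows "b (x + y) z = b x z + b y z" "b (scale c x) z = scale c (b x z)" "b 0 z = 0"
    "b (- x) z = - b x z" "b (x - y) z = b x z - b y z"
    "b z (x + y) = b z x + b z y" "b z (scale c x) = scale c (b z x)" "b z 0 = 0"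
    "b z (- x) = - b z x" "b z (x - y) = b z x - b z y"
  using g_linD[of scale "\<lambda>x. b x z", OF _ assms(2)] g_linD[of scale "\<lambda>x. b z x", OF _ assms(2)] assms(1)
  by (auto simp: g_bilin_def)

lemma alternating_imp_anticommute:
  fixes b :: "'g::ab_group_add \<Rightarrow> 'g \<Rightarrow> 'g"
  assumes "g_bilin scale b" "vector_space scale" "\<And>x. b x x = 0"
  shows "b y x = - b x y"
proof -
  have "b x y + b y x = b (x + y) (x + y)"
    by (simp only: g_bilinD(1,6)[OF assms(1,2)]) (simp add: assms(3))
  also have "\<dots> = 0" by (rule assms(3))
  finally show ?thesis by (simp add: eq_neg_iff_add_eq_0 add.commute)
qed

lemma XlinD:
  assumes "Xlin scale f" "vector_space scale"
  shows "f (u + v) = f u + f v" "f (Xsc scale c u) = Xsc scale c (f u)" "f 0 = 0"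
proof -
  interpret additive f using assms(1) unfolding Xlin_def by unfold_locales blast
  show "f (u + v) = f u + f v" "f 0 = 0" by (simp_all add: add zero)
  show "f (Xsc scale c u) = Xsc scale c (f u)" using assms(1) unfolding Xlin_def by blast
qed

lemma sum_list_map_hom:
  assumes "\<And>a b. f (a + b) = f a + f b" "f 0 = 0"
  shows "f (sum_list (map g xs)) = sum_list (map (\<lambda>a. f (g a)) xs)"
  by (induction xs) (simp_all add: assms)

text \<open>Right multiplication \<open>u \<mapsto> q(u, (0, p))\<close> by a primitive element.\<close>
definition right_ad :: "('g::ab_group_add \<Rightarrow> 'g \<Rightarrow> 'g) \<Rightarrow> 'g \<Rightarrow> 'k::zero \<times> 'g \<Rightarrow> 'k \<times> 'g" where
  "right_ad br p u = (0, br (snd u) p)"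

locale lie_alg =
  fixes scale :: "'k::field \<Rightarrow> 'g::ab_group_add \<Rightarrow> 'g" and br :: "'g \<Rightarrow> 'g \<Rightarrow> 'g"
  assumes lie: "lie_algebra scale br"
begin

sublocale vector_space scale using lie by (simp add: lie_algebra_def)

lemma br_g_bilin: "g_bilin scale br"
  using lie by (simp add: lie_algebra_def)

lemmas br_bilinear[simp] = g_bilinD[OF br_g_bilin vector_space_axioms]

lemma br_self[simp]: "br x x = 0"
  using lie by (simp add: lie_algebra_def)

lemma br_anticommute: "br y x = - br x y"
  using lie by (auto simp: lie_algebra_def intro: alternating_imp_anticommute)

lemma jacobi: "br x (br y z) + br y (br z x) + br z (br x y) = 0"
  using lie by (simp add: lie_algebra_def)

lemma br_right_derivation: "br (br x y) p = br (br x p) y + br x (br y p)"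
proof -
  have "br (br x y) p = - br p (br x y)" by (rule br_anticommute)
  also have "\<dots> = br x (br y p) + br y (br p x)"
    using jacobi[of x y p] by (simp add: neg_eq_iff_add_eq_0 add_ac)
  also have "br y (br p x) = br (br x p) y"
    by (simp add: br_anticommute[of p x] br_anticommute[of y "br x p"])
  finally show ?thesis by (simp add: add.commute)
qed

sublocale X: vector_space "Xsc scale"
  by unfold_locales (auto simp: Xsc_def algebra_simps scale_left_distrib)

lemma qop_pair: "qop scale br u (d, p) = Xsc scale d u + right_ad br p u"
  by (simp add: qop_def Xsc_def right_ad_def mult.commute)

lemma right_ad_qop:
  "right_ad br p (qop scale br u v) = qop scale br (right_ad br p u) v + qop scale br u (right_ad br p v)"
  by (simp add: qop_def right_ad_def br_right_derivation[of "snd u" "snd v" p])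

lemma right_ad_linear[simp]:
  "right_ad br p (u + v) = right_ad br p u + right_ad br p v"
  "right_ad br p (Xsc scale c u) = Xsc scale c (right_ad br p u)"
  "right_ad br p 0 = 0" "right_ad br 0 u = 0"
  by (simp_all add: right_ad_def Xsc_def zero_prod_def)

lemma qop_zero[simp]: "qop scale br 0 v = 0" "qop scale br v 0 = 0"
  by (simp_all add: qop_def zero_prod_def)

lemma qop_left_linear:
  "qop scale br (u + v) w = qop scale br u w + qop scale br v w"
  "qop scale br (Xsc scale c u) w = Xsc scale c (qop scale br u w)"
  by (simp_all add: qop_def Xsc_def algebra_simps scale_left_commute)

lemma Top_trilinear: "Xtrilin scale (Top scale br)"
  unfolding Xtrilin_def Xlin_def Top_def qop_def Xsc_def
  by (simp add: algebra_simps scale_left_commute)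

lemmas Top_linear[simp] =
  XlinD[OF Top_trilinear[unfolded Xtrilin_def, THEN conjunct1, rule_format] vector_space_axioms]
  XlinD[OF Top_trilinear[unfolded Xtrilin_def, THEN conjunct2, THEN conjunct1, rule_format] vector_space_axioms]
  XlinD[OF Top_trilinear[unfolded Xtrilin_def, THEN conjunct2, THEN conjunct2, rule_format] vector_space_axioms]

lemma right_ad_Top:
  "right_ad br p (Top scale br u v w) = Top scale br (right_ad br p u) v w
     + Top scale br u (right_ad br p v) w + Top scale br u v (right_ad br p w)"
  by (simp add: Top_def right_ad_qop qop_left_linear)

lemma Xsc_sum_list: "Xsc scale c (sum_list xs) = sum_list (map (Xsc scale c) xs)"
  by (induction xs) (simp_all add: X.scale_right_distrib)

lemma sum_list_Xsc_nested:
  "sum_list [Xsc scale c (sum_list [Xsc scale d (F w1 w2 w3 u1 u2 u3). (d, u1, u2, u3) \<leftarrow> B]).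
      (c, w1, w2, w3) \<leftarrow> A]
    = sum_list [Xsc scale (c * d) (F w1 w2 w3 u1 u2 u3). (c, w1, w2, w3) \<leftarrow> A, (d, u1, u2, u3) \<leftarrow> B]"
  by (induction A) (auto simp: Xsc_sum_list comp_def X.scale_scale split_def)

lemma qop_Top_distrib:
  "qop scale br (Top scale br x y z) w = sum_list [Xsc scale c
      (Top scale br (qop scale br x w1) (qop scale br y w2) (qop scale br z w3)). (c, w1, w2, w3) \<leftarrow> Delta3 w]"
proof -
  obtain d p where "w = (d, p)" by fastforce
  then show ?thesis
    by (simp add: Delta3_def Delta_def qop_pair right_ad_Top zero_prod_def[symmetric] add_ac)
qed

lemma Top_self_distrib:
  "Top scale br (Top scale br x y z) w u = sum_list [Xsc scale (c * d)
      (Top scale br (Top scale br x w1 u1) (Top scale br y w2 u2) (Top scale br z w3 u3)).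
        (c, w1, w2, w3) \<leftarrow> Delta3 w, (d, u1, u2, u3) \<leftarrow> Delta3 u]"
proof -
  have "Top scale br (Top scale br x y z) w u
      = qop scale br (sum_list [Xsc scale c (Top scale br (qop scale br x w1) (qop scale br y w2)
          (qop scale br z w3)). (c, w1, w2, w3) \<leftarrow> Delta3 w]) u"
    by (simp only: Top_def[of scale br "Top scale br x y z"] qop_Top_distrib)
  also have "\<dots> = sum_list [Xsc scale c (qop scale br (Top scale br (qop scale br x w1) (qop scale br y w2)
          (qop scale br z w3)) u). (c, w1, w2, w3) \<leftarrow> Delta3 w]"
    by (subst sum_list_map_hom[where f = "\<lambda>v. qop scale br v u"])
      (simp_all add: qop_left_linear split_def)
  also have "\<dots> = sum_list [Xsc scale c (sum_list [Xsc scale d (Top scale br (Top scale br x w1 u1)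
          (Top scale br y w2 u2) (Top scale br z w3 u3)). (d, u1, u2, u3) \<leftarrow> Delta3 u]).
        (c, w1, w2, w3) \<leftarrow> Delta3 w]"
    by (simp only: qop_Top_distrib Top_def[symmetric])
  also have "\<dots> = sum_list [Xsc scale (c * d)
      (Top scale br (Top scale br x w1 u1) (Top scale br y w2 u2) (Top scale br z w3 u3)).
        (c, w1, w2, w3) \<leftarrow> Delta3 w, (d, u1, u2, u3) \<leftarrow> Delta3 u]"
    by (rule sum_list_Xsc_nested)
  finally show ?thesis .
qed

end

section \<open>First-order deformations\<close>

definition dual_scale :: "('k::field \<Rightarrow> 'g::ab_group_add \<Rightarrow> 'g) \<Rightarrow> 'k \<Rightarrow> 'g \<times> 'g \<Rightarrow> 'g \<times> 'g" where
  "dual_scale scale c v = (scale c (fst v), scale c (snd v))"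

text \<open>The bracket \<open>[x, y] + \<epsilon> \<phi>(x, y)\<close>, extended \<open>\<epsilon>\<close>-linearly to \<open>g[\<epsilon>] = g \<times> g\<close>.\<close>
definition deformed_br ::
    "('g::ab_group_add \<Rightarrow> 'g \<Rightarrow> 'g) \<Rightarrow> ('g \<Rightarrow> 'g \<Rightarrow> 'g) \<Rightarrow> 'g \<times> 'g \<Rightarrow> 'g \<times> 'g \<Rightarrow> 'g \<times> 'g" where
  "deformed_br br \<phi> v w = (br (fst v) (fst w), br (fst v) (snd w) + br (snd v) (fst w) + \<phi> (fst v) (fst w))"

text \<open>\<open>dual_pair v v'\<close> is \<open>v + \<epsilon> v'\<close> in \<open>X[\<epsilon>]\<close>; the scalar part of \<open>v'\<close> is discarded.\<close>
definition dual_pair :: "'k::zero \<times> 'g \<Rightarrow> 'k \<times> 'g \<Rightarrow> 'k \<times> 'g \<times> 'g" where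
  "dual_pair v v' = (fst v, snd v, snd v')"

lemma snd_sum_list: "snd (sum_list xs) = sum_list (map snd xs)"
  by (induction xs) simp_all

lemma Delta3_dual_pair:
  "Delta3 (dual_pair w (0::'k::field \<times> 'g::ab_group_add))
    = [(c, dual_pair w1 0, dual_pair w2 0, dual_pair w3 0). (c, w1, w2, w3) \<leftarrow> Delta3 w]"
  by (simp add: Delta3_def Delta_def dual_pair_def zero_prod_def)

lemma snd_snd_dual_pair: "snd (snd (dual_pair v v')) = snd v'"
  by (simp add: dual_pair_def)

lemma Xsc_dual_pair: "Xsc (dual_scale scale) c (dual_pair v v') = dual_pair (Xsc scale c v) (Xsc scale c v')"
  by (simp add: Xsc_def dual_scale_def dual_pair_def)

lemma fst_Theta2[simp]: "fst (Theta2 scale br \<phi> u v w) = 0"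
  by (simp add: Theta2_def)

context lie_alg
begin

lemma lie_algebra_deformed:
  assumes "\<phi> \<in> Z2_Lie scale br"
  shows "lie_algebra (dual_scale scale) (deformed_br br \<phi>)"
proof -
  have bil: "g_bilin scale \<phi>" and alt: "\<And>x. \<phi> x x = 0" and cocycle: "\<And>x y z. lie_delta2 br \<phi> x y z = 0"
    using assms by (auto simp: Z2_Lie_def C2_Lie_def)
  note \<phi>_bilinear[simp] = g_bilinD[OF bil vector_space_axioms]
  have \<phi>_anticommute: "\<phi> y x = - \<phi> x y" for x y
    by (rule alternating_imp_anticommute[OF bil vector_space_axioms alt])
  have vs: "vector_space (dual_scale scale)"
    by unfold_locales (auto simp: dual_scale_def scale_left_distrib scale_right_distrib)
  have "g_bilin (dual_scale scale) (deformed_br br \<phi>)"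
    by (auto simp: g_bilin_def g_lin_def deformed_br_def dual_scale_def scale_right_distrib algebra_simps)
  moreover have "deformed_br br \<phi> v v = 0" for v
    by (simp add: deformed_br_def alt zero_prod_def br_anticommute[of "snd v" "fst v"])
  moreover have "deformed_br br \<phi> u (deformed_br br \<phi> v w) + deformed_br br \<phi> v (deformed_br br \<phi> w u)
      + deformed_br br \<phi> w (deformed_br br \<phi> u v) = 0" for u v w
  proof -
    obtain x x' y y' z z' where uvw: "u = (x, x')" "v = (y, y')" "w = (z, z')" by fastforce
    have "snd (deformed_br br \<phi> u (deformed_br br \<phi> v w) + deformed_br br \<phi> v (deformed_br br \<phi> w u)
        + deformed_br br \<phi> w (deformed_br br \<phi> u v))
      = (br x' (br y z) + br y (br z x') + br z (br x' y)) + (br x (br y' z) + br y' (br z x) + br z (br x y'))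
        + (br x (br y z') + br y (br z' x) + br z' (br x y)) - lie_delta2 br \<phi> x y z"
      by (simp add: uvw deformed_br_def lie_delta2_def br_anticommute[of _ "\<phi> _ _"]
          \<phi>_anticommute[of _ "br _ _"] algebra_simps)
    then show ?thesis by (simp add: uvw deformed_br_def jacobi cocycle zero_prod_def)
  qed
  ultimately show ?thesis using vs by (simp add: lie_algebra_def)
qed

lemma Top_deformed:
  assumes "g_bilin scale \<phi>" and "fst u' = 0" "fst v' = 0" "fst w' = 0"
  shows "Top (dual_scale scale) (deformed_br br \<phi>) (dual_pair u u') (dual_pair v v') (dual_pair w w')
    = dual_pair (Top scale br u v w) (Theta2 scale br \<phi> u v w
        + Top scale br u' v w + Top scale br u v' w + Top scale br u v w')"
  using assms(2-4)
  by (simp add: dual_pair_def Top_def qop_def deformed_br_def dual_scale_def Theta2_def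
      g_bilinD[OF assms(1) vector_space_axioms] algebra_simps)

lemma tsd_delta2_Theta2:
  assumes "\<phi> \<in> Z2_Lie scale br"
  shows "tsd_delta2 scale br (Theta2 scale br \<phi>) x y z w u = 0"
proof -
  interpret D: lie_alg "dual_scale scale" "deformed_br br \<phi>"
    by (rule lie_alg.intro, rule lie_algebra_deformed[OF assms])
  have bil: "g_bilin scale \<phi>" using assms by (simp add: Z2_Lie_def C2_Lie_def)
  let ?T' = "Top (dual_scale scale) (deformed_br br \<phi>)"
  let ?lift = "\<lambda>v. dual_pair v (0::'k \<times> 'g)"
  have lhs: "?T' (?T' (?lift x) (?lift y) (?lift z)) (?lift w) (?lift u) = dual_pair
      (Top scale br (Top scale br x y z) w u)
      (Top scale br (Theta2 scale br \<phi> x y z) w u + Theta2 scale br \<phi> (Top scale br x y z) w u)"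
    by (simp add: Top_deformed[OF bil] add.commute)
  have rhs: "sum_list [Xsc (dual_scale scale) (c * d)
        (?T' (?T' (?lift x) w1 u1) (?T' (?lift y) w2 u2) (?T' (?lift z) w3 u3)).
      (c, w1, w2, w3) \<leftarrow> Delta3 (?lift w), (d, u1, u2, u3) \<leftarrow> Delta3 (?lift u)]
    = sum_list [dual_pair
        (Xsc scale (c * d) (Top scale br (Top scale br x w1 u1) (Top scale br y w2 u2) (Top scale br z w3 u3)))
        (Xsc scale (c * d) (Theta2 scale br \<phi> (Top scale br x w1 u1) (Top scale br y w2 u2) (Top scale br z w3 u3)
          + Top scale br (Theta2 scale br \<phi> x w1 u1) (Top scale br y w2 u2) (Top scale br z w3 u3)
          + Top scale br (Top scale br x w1 u1) (Theta2 scale br \<phi> y w2 u2) (Top scale br z w3 u3)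
          + Top scale br (Top scale br x w1 u1) (Top scale br y w2 u2) (Theta2 scale br \<phi> z w3 u3))).
      (c, w1, w2, w3) \<leftarrow> Delta3 w, (d, u1, u2, u3) \<leftarrow> Delta3 u]"
    by (simp add: Delta3_dual_pair Top_deformed[OF bil] Xsc_dual_pair comp_def split_def)
  have "snd (tsd_delta2 scale br (Theta2 scale br \<phi>) x y z w u)
    = snd (snd (?T' (?T' (?lift x) (?lift y) (?lift z)) (?lift w) (?lift u)
        - sum_list [Xsc (dual_scale scale) (c * d)
              (?T' (?T' (?lift x) w1 u1) (?T' (?lift y) w2 u2) (?T' (?lift z) w3 u3)).
            (c, w1, w2, w3) \<leftarrow> Delta3 (?lift w), (d, u1, u2, u3) \<leftarrow> Delta3 (?lift u)]))"
    unfolding lhs rhs tsd_delta2_def Let_def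
    by (simp add: snd_sum_list map_concat comp_def split_def snd_snd_dual_pair)
  also have "\<dots> = 0"
    by (simp only: D.Top_self_distrib[of "?lift x" "?lift y" "?lift z" "?lift w" "?lift u"] diff_self) simp
  finally have "snd (tsd_delta2 scale br (Theta2 scale br \<phi>) x y z w u) = 0" .
  moreover have "fst (tsd_delta2 scale br (Theta2 scale br \<phi>) x y z w u) = 0"
    by (simp add: tsd_delta2_def Top_def qop_def Theta2_def Delta3_def Delta_def Xsc_def)
  ultimately show ?thesis by (simp add: prod_eq_iff)
qed

end

section \<open>Formal sums in \<open>X \<otimes> X \<otimes> X\<close>\<close>

lemma fsum3_Nil[simp]: "fsum3 [] s = 0"
  by (simp add: fsum3_def)

lemma fsum3_Cons[simp]: "fsum3 (e # l) s = fst e * dl3 (snd e) s + fsum3 l s"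
  by (simp add: fsum3_def dl3_def)

lemma fsum3_append[simp]: "fsum3 (l @ m) s = fsum3 l s + fsum3 m s"
  by (simp add: fsum3_def)

lemma tz3_uminus: "tz3 scale f \<Longrightarrow> tz3 scale (\<lambda>s. - f s)"
  using tz3_smult[of scale f "-1"] by simp

lemma tensor3_eq_if_fsum3_eq: "(\<And>s. fsum3 l s = fsum3 m s) \<Longrightarrow> tensor3_eq scale l m"
  by (simp add: tensor3_eq_def tz3_zero)

lemma tensor3_eq_refl: "tensor3_eq scale l l"
  by (rule tensor3_eq_if_fsum3_eq) (rule refl)

lemma tensor3_eq_sym: "tensor3_eq scale l m \<Longrightarrow> tensor3_eq scale m l"
  unfolding tensor3_eq_def by (drule tz3_uminus) simp

lemma tensor3_eq_trans[trans]:
  "tensor3_eq scale l m \<Longrightarrow> tensor3_eq scale m n \<Longrightarrow> tensor3_eq scale l n"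
  unfolding tensor3_eq_def by (drule (1) tz3_add) simp

lemma tensor3_eq_append:
  "tensor3_eq scale l m \<Longrightarrow> tensor3_eq scale l' m' \<Longrightarrow> tensor3_eq scale (l @ l') (m @ m')"
  unfolding tensor3_eq_def by (drule (1) tz3_add) (simp add: algebra_simps)

lemma tensor3_eq_gen:
  assumes "f \<in> gens3 scale" "\<And>s. fsum3 l s - fsum3 m s = f s"
  shows "tensor3_eq scale l m"
  using tz3_gen[OF assms(1)] assms(2) by (simp add: tensor3_eq_def)

lemma gens3I:
  "(\<lambda>s. dl3 (u + v, y, z) s - dl3 (u, y, z) s - dl3 (v, y, z) s) \<in> gens3 scale"
  "(\<lambda>s. dl3 (x, u + v, z) s - dl3 (x, u, z) s - dl3 (x, v, z) s) \<in> gens3 scale"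
  "(\<lambda>s. dl3 (x, y, u + v) s - dl3 (x, y, u) s - dl3 (x, y, v) s) \<in> gens3 scale"
  "(\<lambda>s. dl3 (Xsc scale c u, y, z) s - c * dl3 (u, y, z) s) \<in> gens3 scale"
  "(\<lambda>s. dl3 (x, Xsc scale c u, z) s - c * dl3 (x, u, z) s) \<in> gens3 scale"
  "(\<lambda>s. dl3 (x, y, Xsc scale c u) s - c * dl3 (x, y, u) s) \<in> gens3 scale"
  unfolding gens3_def by (rule UnI1 UnI2 CollectI exI conjI[OF refl TrueI])+

lemma tensor3_eq_Xsc:
  "tensor3_eq scale [(1, Xsc scale c p, q, r)] [(c, p, q, r)]"
  "tensor3_eq scale [(1, p, Xsc scale c q, r)] [(c, p, q, r)]"
  "tensor3_eq scale [(1, p, q, Xsc scale c r)] [(c, p, q, r)]"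
  by (rule tensor3_eq_gen[OF gens3I(4)] tensor3_eq_gen[OF gens3I(5)] tensor3_eq_gen[OF gens3I(6)], simp)+

lemma tensor3_eq_add:
  "tensor3_eq scale [(1, p + p', q, r)] [(1, p, q, r), (1, p', q, r)]"
  "tensor3_eq scale [(1, p, q + q', r)] [(1, p, q, r), (1, p, q', r)]"
  "tensor3_eq scale [(1, p, q, r + r')] [(1, p, q, r), (1, p, q, r')]"
  by (rule tensor3_eq_gen[OF gens3I(1)] tensor3_eq_gen[OF gens3I(2)] tensor3_eq_gen[OF gens3I(3)],
      simp add: algebra_simps)+

definition nonzero_factors :: "('a::zero) \<times> 'a \<times> 'a \<Rightarrow> bool" where
  "nonzero_factors t \<longleftrightarrow> fst t \<noteq> 0 \<and> fst (snd t) \<noteq> 0 \<and> snd (snd t) \<noteq> 0"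

lemma tz3_zero_factor:
  fixes t :: "('k::field \<times> 'g::ab_group_add) \<times> ('k \<times> 'g) \<times> ('k \<times> 'g)"
  assumes "\<not> nonzero_factors t"
  shows "tz3 scale (\<lambda>s. c * dl3 t s)"
proof -
  obtain p q r where t: "t = (p, q, r)" by (cases t) auto
  have "(\<lambda>s. dl3 (0 + 0, q, r) s - dl3 (0, q, r) s - dl3 (0, q, r) s) \<in> gens3 scale"
    "(\<lambda>s. dl3 (p, 0 + 0, r) s - dl3 (p, 0, r) s - dl3 (p, 0, r) s) \<in> gens3 scale"
    "(\<lambda>s. dl3 (p, q, 0 + 0) s - dl3 (p, q, 0) s - dl3 (p, q, 0) s) \<in> gens3 scale"
    by (rule gens3I)+
  then have "(\<lambda>s. - dl3 t s) \<in> gens3 scale"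
    using assms by (auto simp: t nonzero_factors_def)
  from tz3_smult[OF tz3_gen[OF this], of "- c"] show ?thesis by simp
qed

lemma dl3_zero_factor:
  assumes "nonzero_factors s"
  shows "dl3 (0, q, r) s = 0" "dl3 (p, 0, r) s = 0" "dl3 (p, q, 0) s = 0" "dl3 (p, 0) s = 0" "dl3 0 s = 0"
  using assms by (auto simp: dl3_def nonzero_factors_def zero_prod_def)

lemma fsum3_filter:
  "fsum3 (filter (\<lambda>e. P (snd e)) l) s = (if P s then fsum3 l s else 0)"
  by (induction l) (auto simp: dl3_def)

lemma tensor3_eq_filter_nonzero_factors:
  "tensor3_eq scale l (filter (\<lambda>e. nonzero_factors (snd e)) l)"
proof (induction l)
  case Nil
  show ?case by (simp add: tensor3_eq_refl)
next
  case (Cons e l)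
  show ?case
  proof (cases "nonzero_factors (snd e)")
    case True
    then show ?thesis
      using tensor3_eq_append[OF tensor3_eq_refl[of scale "[e]"] Cons.IH] by simp
  next
    case False
    have "tz3 scale (\<lambda>s. fst e * dl3 (snd e) s
        + (fsum3 l s - fsum3 (filter (\<lambda>e. nonzero_factors (snd e)) l) s))"
      using tz3_add[OF tz3_zero_factor[OF False] Cons.IH[unfolded tensor3_eq_def]] .
    with False show ?thesis by (simp add: tensor3_eq_def add_diff_eq)
  qed
qed

lemma tensor3_eqI_nonzero_factors:
  assumes "\<And>s. nonzero_factors s \<Longrightarrow> fsum3 l s = fsum3 m s"
  shows "tensor3_eq scale l m"
proof -
  have "tensor3_eq scale (filter (\<lambda>e. nonzero_factors (snd e)) l) (filter (\<lambda>e. nonzero_factors (snd e)) m)"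
    by (rule tensor3_eq_if_fsum3_eq) (simp add: fsum3_filter assms)
  then show ?thesis
    by (rule tensor3_eq_trans[OF tensor3_eq_trans[OF tensor3_eq_filter_nonzero_factors]
          tensor3_eq_sym[OF tensor3_eq_filter_nonzero_factors]])
qed

lemma tensor3_eq_Cons:
  "tensor3_eq scale [e] [e'] \<Longrightarrow> tensor3_eq scale l l' \<Longrightarrow> tensor3_eq scale (e # l) (e' # l')"
  using tensor3_eq_append[of scale "[e]" "[e']" l l'] by simp

lemma tensor3_eq_split_second:
  "tensor3_eq scale [(1, p, (0, scale b u + scale c v + w), r)]
     [(1, Xsc scale b p, (0, u), r), (1, Xsc scale c p, (0, v), r), (1, p, (0, w), r)]"
proof -
  have "tensor3_eq scale [(1, p, (0, scale b u + scale c v + w), r)]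
      [(1, p, (0, scale b u + scale c v), r), (1, p, (0, w), r)]"
    using tensor3_eq_add(2)[of scale p "(0, scale b u + scale c v)" "(0, w)" r] by simp
  also have "tensor3_eq scale \<dots> [(1, p, (0, scale b u), r), (1, p, (0, scale c v), r), (1, p, (0, w), r)]"
    using tensor3_eq_append[OF tensor3_eq_add(2)[of scale p "(0, scale b u)" "(0, scale c v)" r]
        tensor3_eq_refl[of scale "[(1, p, (0, w), r)]"]] by simp
  also have "tensor3_eq scale \<dots> [(b, p, (0, u), r), (c, p, (0, v), r), (1, p, (0, w), r)]"
    using tensor3_eq_Cons[OF tensor3_eq_Xsc(2)[of scale p b "(0, u)" r]
        tensor3_eq_Cons[OF tensor3_eq_Xsc(2)[of scale p c "(0, v)" r] tensor3_eq_refl]]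
    by (simp add: Xsc_def)
  also have "tensor3_eq scale \<dots> [(1, Xsc scale b p, (0, u), r), (1, Xsc scale c p, (0, v), r), (1, p, (0, w), r)]"
    by (rule tensor3_eq_Cons[OF tensor3_eq_sym[OF tensor3_eq_Xsc(1)]
        tensor3_eq_Cons[OF tensor3_eq_sym[OF tensor3_eq_Xsc(1)] tensor3_eq_refl]])
  finally show ?thesis .
qed

lemma tensor3_eq_split_third:
  "tensor3_eq scale [(1, p, q, (0, scale b u + scale c v + w))]
     [(1, Xsc scale b p, q, (0, u)), (1, Xsc scale c p, q, (0, v)), (1, p, q, (0, w))]"
proof -
  have "tensor3_eq scale [(1, p, q, (0, scale b u + scale c v + w))]
      [(1, p, q, (0, scale b u + scale c v)), (1, p, q, (0, w))]"
    using tensor3_eq_add(3)[of scale p q "(0, scale b u + scale c v)" "(0, w)"] by simp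
  also have "tensor3_eq scale \<dots> [(1, p, q, (0, scale b u)), (1, p, q, (0, scale c v)), (1, p, q, (0, w))]"
    using tensor3_eq_append[OF tensor3_eq_add(3)[of scale p q "(0, scale b u)" "(0, scale c v)"]
        tensor3_eq_refl[of scale "[(1, p, q, (0, w))]"]] by simp
  also have "tensor3_eq scale \<dots> [(b, p, q, (0, u)), (c, p, q, (0, v)), (1, p, q, (0, w))]"
    using tensor3_eq_Cons[OF tensor3_eq_Xsc(3)[of scale p q b "(0, u)"]
        tensor3_eq_Cons[OF tensor3_eq_Xsc(3)[of scale p q c "(0, v)"] tensor3_eq_refl]]
    by (simp add: Xsc_def)
  also have "tensor3_eq scale \<dots> [(1, Xsc scale b p, q, (0, u)), (1, Xsc scale c p, q, (0, v)), (1, p, q, (0, w))]"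
    by (rule tensor3_eq_Cons[OF tensor3_eq_sym[OF tensor3_eq_Xsc(1)]
        tensor3_eq_Cons[OF tensor3_eq_sym[OF tensor3_eq_Xsc(1)] tensor3_eq_refl]])
  finally show ?thesis .
qed

section \<open>\<open>\<Theta>\<^sup>2\<close> on cocycles and coboundaries\<close>

context lie_alg
begin

lemma Theta2_trilinear:
  assumes "g_bilin scale \<phi>"
  shows "Xtrilin scale (Theta2 scale br \<phi>)"
  unfolding Xtrilin_def Xlin_def Theta2_def Xsc_def
  by (simp add: g_bilinD[OF assms vector_space_axioms] scale_right_distrib scale_left_distrib
      scale_left_commute algebra_simps)

lemma Theta2_comultiplicative:
  assumes bil: "g_bilin scale \<phi>"
  shows "tensor3_eq scale (Delta3 (Theta2 scale br \<phi> x y z))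
      (concat (map (\<lambda>(c, us). let vs = sigma9 us; T = Top scale br in
          [(c, tapp3 (Theta2 scale br \<phi>) T T vs), (c, tapp3 T (Theta2 scale br \<phi>) T vs),
           (c, tapp3 T T (Theta2 scale br \<phi>) vs)])
        (Delta3_pow3 x y z)))"
    (is "tensor3_eq scale _ ?rhs")
proof -
  obtain a x0 b y0 c z0 where xyz: "x = (a, x0)" "y = (b, y0)" "z = (c, z0)" by (cases x, cases y, cases z) auto
  define u where "u = br (\<phi> x0 y0) z0 + \<phi> (br x0 y0) z0"
  define V where "V = scale b (\<phi> x0 z0) + scale c (\<phi> x0 y0) + u"
  have "Theta2 scale br \<phi> x y z = (0, V)"
    by (simp add: xyz Theta2_def V_def u_def add.assoc)
  then have "tensor3_eq scale (Delta3 (Theta2 scale br \<phi> x y z))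
      ([(1, (0, V), (1, 0), (1, 0))] @ [(1, (1, 0), (0, V), (1, 0))] @ [(1, (1, 0), (1, 0), (0, V))])"
    by (intro tensor3_eqI_nonzero_factors) (simp add: Delta3_def Delta_def zero_prod_def[symmetric] dl3_zero_factor)
  also have "tensor3_eq scale \<dots>
      ([(1, (0, V), (1, 0), (1, 0))]
       @ [(1, (b, 0), (0, \<phi> x0 z0), (1, 0)), (1, (c, 0), (0, \<phi> x0 y0), (1, 0)), (1, (1, 0), (0, u), (1, 0))]
       @ [(1, (b, 0), (1, 0), (0, \<phi> x0 z0)), (1, (c, 0), (1, 0), (0, \<phi> x0 y0)), (1, (1, 0), (1, 0), (0, u))])"
    using tensor3_eq_split_second[of scale "(1, 0)" b "\<phi> x0 z0" c "\<phi> x0 y0" u "(1, 0)"]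
      tensor3_eq_split_third[of scale "(1, 0)" "(1, 0)" b "\<phi> x0 z0" c "\<phi> x0 y0" u]
    by (intro tensor3_eq_append tensor3_eq_refl) (simp_all add: V_def Xsc_def)
  also have "tensor3_eq scale \<dots> ?rhs"
    by (intro tensor3_eqI_nonzero_factors)
      (simp add: xyz V_def u_def Delta3_pow3_def Delta3_def Delta_def sigma9_def tapp3_def Top_def qop_def
        Theta2_def g_bilinD[OF bil vector_space_axioms] zero_prod_def[symmetric] dl3_zero_factor add.assoc)
  finally show ?thesis .
qed

lemma Theta2_in_C2_TSD:
  assumes "g_bilin scale \<phi>"
  shows "Theta2 scale br \<phi> \<in> C2_TSD scale br"
  unfolding C2_TSD_def using Theta2_trilinear[OF assms] Theta2_comultiplicative[OF assms] by simp

lemma Theta2_coboundary: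
  assumes f: "g_lin scale f"
  shows "Theta2 scale br (lie_delta1 br f) \<in> B2_TSD scale br"
proof -
  note f_linear[simp] = g_linD[OF f vector_space_axioms]
  define F where "F w = (0 :: 'k, f (snd w))" for w :: "'k \<times> 'g"
  have "Xlin scale F" by (simp add: Xlin_def F_def Xsc_def)
  moreover have "tensor3_eq scale (Delta3 (F w))
      (concat (map (\<lambda>(c, p, q, r). [(c, F p, q, r), (c, p, F q, r), (c, p, q, F r)]) (Delta3 w)))" for w
    by (intro tensor3_eqI_nonzero_factors)
      (simp add: F_def Delta3_def Delta_def zero_prod_def[symmetric] dl3_zero_factor add_ac)
  ultimately have "F \<in> C1_TSD scale" by (simp add: C1_TSD_def)
  moreover have "tsd_delta1 scale br F = Theta2 scale br (lie_delta1 br f)"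
    by (auto intro!: ext simp: F_def tsd_delta1_def Top_def qop_def Theta2_def lie_delta1_def
        scale_right_diff_distrib algebra_simps)
  ultimately show ?thesis unfolding B2_TSD_def by (metis image_eqI)
qed

lemma Theta2_in_Z2_TSD:
  assumes "\<phi> \<in> Z2_Lie scale br"
  shows "Theta2 scale br \<phi> \<in> Z2_TSD scale br"
  using assms Theta2_in_C2_TSD tsd_delta2_Theta2 by (simp add: Z2_TSD_def Z2_Lie_def C2_Lie_def)

lemma Theta2_linear:
  "Theta2 scale br (\<lambda>x y. \<phi> x y + \<phi>' x y)
    = (\<lambda>u v w. Theta2 scale br \<phi> u v w + Theta2 scale br \<phi>' u v w)"
  "Theta2 scale br (\<lambda>x y. scale c (\<phi> x y)) = (\<lambda>u v w. Xsc scale c (Theta2 scale br \<phi> u v w))"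
  by (auto intro!: ext simp: Theta2_def Xsc_def scale_right_distrib scale_left_commute add_ac mult_ac)

end

theorem mainTheorem7:
  fixes scale :: "'k::field \<Rightarrow> 'g::ab_group_add \<Rightarrow> 'g"
    and br :: "'g \<Rightarrow> 'g \<Rightarrow> 'g"
  assumes "lie_algebra scale br"
  shows "(\<forall>\<phi> \<in> Z2_Lie scale br. Theta2 scale br \<phi> \<in> Z2_TSD scale br)
    \<and> (\<forall>\<phi> \<in> B2_Lie scale br. Theta2 scale br \<phi> \<in> B2_TSD scale br)
    \<and> (\<forall>\<phi> \<phi>' c. Theta2 scale br (\<lambda>x y. \<phi> x y + \<phi>' x y)
           = (\<lambda>u v w. Theta2 scale br \<phi> u v w + Theta2 scale br \<phi>' u v w)
        \<and> Theta2 scale br (\<lambda>x y. scale c (\<phi> x y)) = (\<lambda>u v w. Xsc scale c (Theta2 scale br \<phi> u v w)))"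
proof -
  interpret lie_alg scale br by (rule lie_alg.intro) (fact assms)
  show ?thesis
    using Theta2_in_Z2_TSD Theta2_coboundary Theta2_linear by (auto simp: B2_Lie_def)
qed

end
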